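(* There exists a $10$-ary $3$-frameproof code of length $5$ and cardinality $135$ satisfying Property $P(2)$.
   Context: For $P\subseteq F^l$ over a finite alphabet $F$, $desc(P)=\{x\in F^l: \text{for every } i \text{ there is } y\in P \text{ with } x_i=y_i\}$. For an integer $c\geq 2$, a $c$-frameproof code is a subset $C\subseteq F^l$ with $desc(P)\cap C=P$ for every $P\subseteq C$ with $|P|\leq c$; it is $q$-ary if $|F|=q$. A $c$-frameproof code $C$ over an alphabet $S$ satisfies Property $P(t)$ if there is a special element $\infty\in S$ such that every codeword has at most $t-1$ coordinates equal to $\infty$ and any two codewords that agree in $t$ coordinates where their common value is not $\infty$ are equal. *)

theory Defs
  imports Main
begin

definition words :: "'a set \<Rightarrow> nat \<Rightarrow> 'a list set" where
  "words F l = {x. length x = l \<and> set x \<subseteq> F}"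

definition desc :: "'a set \<Rightarrow> nat \<Rightarrow> 'a list set \<Rightarrow> 'a list set" where
  "desc F l P = {x \<in> words F l. \<forall>i<l. \<exists>y\<in>P. x ! i = y ! i}"

definition frameproof :: "nat \<Rightarrow> 'a set \<Rightarrow> nat \<Rightarrow> 'a list set \<Rightarrow> bool" where
  "frameproof c F l C \<longleftrightarrow> C \<subseteq> words F l \<and>
     (\<forall>P. P \<subseteq> C \<and> finite P \<and> card P \<le> c \<longrightarrow> desc F l P \<inter> C = P)"

definition propertyP :: "nat \<Rightarrow> 'a set \<Rightarrow> nat \<Rightarrow> 'a list set \<Rightarrow> bool" where
  "propertyP t S l C \<longleftrightarrow> (\<exists>inf\<in>S.
     (\<forall>x\<in>C. card {i. i < l \<and> x ! i = inf} \<le> t - 1) \<and>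
     (\<forall>x\<in>C. \<forall>y\<in>C. (\<exists>T. T \<subseteq> {..<l} \<and> card T = t \<and>
          (\<forall>i\<in>T. x ! i = y ! i \<and> x ! i \<noteq> inf)) \<longrightarrow> x = y))"

end

theory Submission
  imports Defs
begin

text \<open>
  If a word \<open>x\<close> of a code with Property P(t) descends from at most \<open>c\<close> codewords,
  each of its at least \<open>l - (t - 1)\<close> coordinates different from \<open>\<infinity>\<close> is copied from
  one of them. When \<open>c (t - 1) < l - (t - 1)\<close>, some parent supplies \<open>t\<close> such
  coordinates and hence equals \<open>x\<close> by Property P(t); for \<open>t = 2\<close>, \<open>l = 5\<close> this gives
  3-frameproofness. For the explicit code, with \<open>\<infinity> = 9\<close>, Property P(2) is
  checked by computation.
\<close>

lemma pigeonhole_card_UN: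
  assumes "finite Q" "\<And>y. y \<in> Q \<Longrightarrow> finite (B y)"
    and "A \<subseteq> (\<Union>y\<in>Q. B y)" and "card Q * k < card A"
  shows "\<exists>y\<in>Q. k < card (B y)"
proof (rule ccontr)
  assume small: "\<not> ?thesis"
  have "card A \<le> card (\<Union>y\<in>Q. B y)"
    using assms by (intro card_mono) auto
  also have "\<dots> \<le> (\<Sum>y\<in>Q. card (B y))"
    by (rule card_UN_le[OF \<open>finite Q\<close>])
  also have "\<dots> \<le> card Q * k"
    using sum_bounded_above[of Q "\<lambda>y. card (B y)" k] small by force
  finally show False
    using assms(4) by linarith
qed

lemma propertyP_imp_frameproof:
  assumes P: "propertyP t F l C" and C: "C \<subseteq> words F l"
    and len: "c * (t - 1) < l - (t - 1)"
  shows "frameproof c F l C"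
proof -
  obtain \<omega> where
    few_omega: "\<And>x. x \<in> C \<Longrightarrow> card {i. i < l \<and> x ! i = \<omega>} \<le> t - 1" and
    sep: "\<And>x y T. \<lbrakk>x \<in> C; y \<in> C; T \<subseteq> {..<l}; card T = t;
                    \<forall>i\<in>T. x ! i = y ! i \<and> x ! i \<noteq> \<omega>\<rbrakk> \<Longrightarrow> x = y"
    using P unfolding propertyP_def by blast
  define agree where "agree x y = {i. i < l \<and> x ! i = y ! i \<and> x ! i \<noteq> \<omega>}" for x y
  have eq_if_agree: "x = y" if "x \<in> C" "y \<in> C" "t \<le> card (agree x y)" for x y
  proof -
    obtain T where "T \<subseteq> agree x y" "card T = t"
      using obtain_subset_with_card_n[OF \<open>t \<le> card (agree x y)\<close>] by metis
    then show ?thesis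
      using sep[OF that(1,2)] unfolding agree_def by blast
  qed
  have "x \<in> Q" if Q: "Q \<subseteq> C" "finite Q" "card Q \<le> c" and x: "x \<in> desc F l Q" "x \<in> C" for Q x
  proof -
    let ?fin = "{i. i < l \<and> x ! i \<noteq> \<omega>}"
    have "?fin = {..<l} - {i. i < l \<and> x ! i = \<omega>}" by auto
    then have "card ?fin = l - card {i. i < l \<and> x ! i = \<omega>}"
      by (simp add: card_Diff_subset subset_eq)
    with few_omega[OF x(2)] len have big: "c * (t - 1) < card ?fin" by linarith
    have cover: "?fin \<subseteq> (\<Union>y\<in>Q. agree x y)"
      using x(1) unfolding desc_def agree_def by auto
    have "card Q * (t - 1) < card ?fin"
      using mult_le_mono1[OF Q(3), of "t - 1"] big by linarith
    then have "\<exists>y\<in>Q. t - 1 < card (agree x y)"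
      using pigeonhole_card_UN[OF Q(2) _ cover] unfolding agree_def by simp
    then obtain y where y: "y \<in> Q" "t - 1 < card (agree x y)" ..
    then have "x = y"
      using eq_if_agree[OF x(2), of y] Q(1) by (simp add: subset_iff)
    with y(1) show ?thesis by simp
  qed
  moreover have "Q \<subseteq> desc F l Q" if "Q \<subseteq> C" for Q
    using that C unfolding desc_def by blast
  ultimately show ?thesis
    using C unfolding frameproof_def by blast
qed

lemma propertyP_if_agreements_lt:
  assumes "\<omega> \<in> S"
    and "\<forall>x\<in>C. card {i. i < l \<and> x ! i = \<omega>} \<le> t - 1"
    and agree: "\<forall>x\<in>C. \<forall>y\<in>C. x \<noteq> y \<longrightarrow> card {i. i < l \<and> x ! i = y ! i \<and> x ! i \<noteq> \<omega>} < t"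
  shows "propertyP t S l C"
  unfolding propertyP_def
proof (intro bexI[OF _ \<open>\<omega> \<in> S\<close>] conjI assms(2) ballI impI)
  fix x y assume "x \<in> C" "y \<in> C"
    and "\<exists>T\<subseteq>{..<l}. card T = t \<and> (\<forall>i\<in>T. x ! i = y ! i \<and> x ! i \<noteq> \<omega>)"
  then obtain T where "T \<subseteq> {i. i < l \<and> x ! i = y ! i \<and> x ! i \<noteq> \<omega>}" "card T = t"
    by auto
  then have "t \<le> card {i. i < l \<and> x ! i = y ! i \<and> x ! i \<noteq> \<omega>}"
    by (metis (no_types, lifting) card_mono finite_nat_set_iff_bounded mem_Collect_eq)
  then show "x = y"
    using agree \<open>x \<in> C\<close> \<open>y \<in> C\<close> by fastforce
qed

lemma length_filter_upt: "length (filter P [0..<n]) = card {i. i < n \<and> P i}"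
  unfolding length_filter_conv_card by (rule arg_cong[where f = card]) auto

definition code135 :: "nat list list" where
  "code135 = [
  [9,8,1,8,8],
  [9,2,1,4,1],
  [9,5,1,0,3],
  [9,8,4,2,2],
  [9,2,4,7,4],
  [9,5,4,3,6],
  [9,8,7,5,5],
  [9,2,7,1,7],
  [9,5,7,6,0],
  [9,6,2,6,6],
  [9,0,2,5,2],
  [9,3,2,1,4],
  [9,6,5,0,0],
  [9,0,5,8,5],
  [9,3,5,4,7],
  [9,6,8,3,3],
  [9,0,8,2,8],
  [9,3,8,7,1],
  [9,7,0,7,7],
  [9,1,0,3,0],
  [9,4,0,2,5],
  [9,7,3,1,1],
  [9,1,3,6,3],
  [9,4,3,5,8],
  [9,7,6,4,4],
  [9,1,6,0,6],
  [9,4,6,8,2],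
  [4,9,1,3,7],
  [7,9,1,2,0],
  [1,9,1,7,5],
  [5,9,4,6,1],
  [8,9,4,5,3],
  [2,9,4,1,8],
  [3,9,7,0,4],
  [6,9,7,8,6],
  [0,9,7,4,2],
  [4,9,2,4,8],
  [7,9,2,0,1],
  [1,9,2,8,3],
  [5,9,5,7,2],
  [8,9,5,3,4],
  [2,9,5,2,6],
  [3,9,8,1,5],
  [6,9,8,6,7],
  [0,9,8,5,0],
  [4,9,0,5,6],
  [7,9,0,1,2],
  [1,9,0,6,4],
  [5,9,3,8,0],
  [8,9,3,4,5],
  [2,9,3,0,7],
  [3,9,6,2,3],
  [6,9,6,7,8],
  [0,9,6,3,1],
  [2,8,9,7,0],
  [5,2,9,3,5],
  [8,5,9,2,7],
  [0,8,9,1,3],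
  [3,2,9,6,8],
  [6,5,9,5,1],
  [1,8,9,4,6],
  [4,2,9,0,2],
  [7,5,9,8,4],
  [2,6,9,8,1],
  [5,0,9,4,3],
  [8,3,9,0,8],
  [0,6,9,2,4],
  [3,0,9,7,6],
  [6,3,9,3,2],
  [1,6,9,5,7],
  [4,0,9,1,0],
  [7,3,9,6,5],
  [2,7,9,6,2],
  [5,1,9,5,4],
  [8,4,9,1,6],
  [0,7,9,0,5],
  [3,1,9,8,7],
  [6,4,9,4,0],
  [1,7,9,3,8],
  [4,1,9,2,1],
  [7,4,9,7,3],
  [8,0,0,9,1],
  [2,3,0,9,3],
  [5,6,0,9,8],
  [6,0,3,9,4],
  [0,3,3,9,6],
  [3,6,3,9,2],
  [7,0,6,9,7],
  [1,3,6,9,0],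
  [4,6,6,9,5],
  [8,1,1,9,2],
  [2,4,1,9,4],
  [5,7,1,9,6],
  [6,1,4,9,5],
  [0,4,4,9,7],
  [3,7,4,9,0],
  [7,1,7,9,8],
  [1,4,7,9,1],
  [4,7,7,9,3],
  [8,2,2,9,0],
  [2,5,2,9,5],
  [5,8,2,9,7],
  [6,2,5,9,3],
  [0,5,5,9,8],
  [3,8,5,9,1],
  [7,2,8,9,6],
  [1,5,8,9,2],
  [4,8,8,9,4],
  [3,3,1,5,9],
  [6,6,1,1,9],
  [0,0,1,6,9],
  [4,3,4,8,9],
  [7,6,4,4,9],
  [1,0,4,0,9],
  [5,3,7,2,9],
  [8,6,7,7,9],
  [2,0,7,3,9],
  [3,4,2,3,9],
  [6,7,2,2,9],
  [0,1,2,7,9],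
  [4,4,5,6,9],
  [7,7,5,5,9],
  [1,1,5,1,9],
  [5,4,8,0,9],
  [8,7,8,8,9],
  [2,1,8,4,9],
  [3,5,0,4,9],
  [6,8,0,0,9],
  [0,2,0,8,9],
  [4,5,3,7,9],
  [7,8,3,3,9],
  [1,2,3,2,9],
  [5,5,6,1,9],
  [8,8,6,6,9],
  [2,2,6,5,9]]"

lemma code135_distinct: "distinct code135"
  unfolding code135_def by code_simp

lemma code135_length: "length code135 = 135"
  unfolding code135_def by simp

lemma code135_words_check:
  "list_all (\<lambda>x. length x = 5 \<and> list_all (\<lambda>a. a \<le> 9) x
     \<and> length (filter (\<lambda>i. x ! i = 9) [0..<5]) \<le> 1) code135"
  unfolding code135_def by code_simp

lemma code135_agreements_check:
  "list_all (\<lambda>x. list_all (\<lambda>y. x = y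
     \<or> length (filter (\<lambda>i. x ! i = y ! i \<and> x ! i \<noteq> 9) [0..<5]) \<le> 1) code135) code135"
  unfolding code135_def by code_simp

lemma code135_subset_words: "set code135 \<subseteq> words {0..9} 5"
  using code135_words_check unfolding words_def list_all_iff by auto

lemma propertyP_code135: "propertyP 2 {0..9} 5 (set code135)"
proof (rule propertyP_if_agreements_lt[where \<omega> = 9])
  show "\<forall>x\<in>set code135. card {i. i < 5 \<and> x ! i = 9} \<le> 2 - 1"
    using code135_words_check unfolding list_all_iff length_filter_upt by simp
  show "\<forall>x\<in>set code135. \<forall>y\<in>set code135. x \<noteq> y \<longrightarrow>
          card {i. i < 5 \<and> x ! i = y ! i \<and> x ! i \<noteq> 9} < 2"
    using code135_agreements_check unfolding list_all_iff length_filter_upt by fastforce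
qed simp

theorem lemma4:
  shows "\<exists>(F :: nat set) (C :: nat list set). finite F \<and> card F = 10 \<and>
           frameproof 3 F 5 C \<and> finite C \<and> card C = 135 \<and> propertyP 2 F 5 C"
proof (intro exI conjI)
  show "frameproof 3 {0..9::nat} 5 (set code135)"
    using propertyP_imp_frameproof[OF propertyP_code135 code135_subset_words] by simp
  show "card (set code135) = 135"
    using distinct_card[OF code135_distinct] code135_length by simp
qed (simp_all add: propertyP_code135)

end
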